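(* Let $\boldsymbol{y}_1,\boldsymbol{y}_2,\boldsymbol{\lambda}_1,\boldsymbol{\lambda}_2\in\mathbb{R}^p$, where $\{\lambda_{1,i}\}_{1\le i\le p}$ and $\{\lambda_{2,i}\}_{1\le i\le p}$ are non-negative non-decreasing sequences. Then \[ \|\mathrm{Prox}_{\boldsymbol{\lambda}_1}(\boldsymbol{y}_1)-\mathrm{Prox}_{\boldsymbol{\lambda}_2}(\boldsymbol{y}_2)\|_2\le2\big(\|\boldsymbol{\lambda}_1-\boldsymbol{\lambda}_2\|_2+\|\boldsymbol{y}_1-\boldsymbol{y}_2\|_2\big). \]
   Context: For $\boldsymbol y\in\mathbb{R}^p$ and $0\le\lambda_1\le\cdots\le\lambda_p$, $\mathrm{Prox}_{\boldsymbol{\lambda}}(\boldsymbol{y})=\arg\min_{\boldsymbol{x}\in\mathbb{R}^p}\frac12\|\boldsymbol{y}-\boldsymbol{x}\|_2^2+\sum_{i=1}^p\lambda_i|x|_{(i)}$, where $|x|_{(1)}\le\cdots\le|x|_{(p)}$ is the increasing rearrangement of $|x_1|,\dots,|x_p|$. *)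

theory Defs
  imports Complex_Main
begin

text \<open>Vectors in R^p are represented as real lists of length p (index i-1 of the
list is coordinate i). The increasing rearrangement of |x_1|,...,|x_p| is
sort (map abs x).\<close>

definition norm2 :: "real list \<Rightarrow> real" where
  "norm2 v = sqrt (\<Sum>i<length v. (v ! i)^2)"

definition vdiff :: "real list \<Rightarrow> real list \<Rightarrow> real list" where
  "vdiff u v = map2 (-) u v"

definition sorted_l1 :: "real list \<Rightarrow> real list \<Rightarrow> real" where
  "sorted_l1 lam x = (\<Sum>i<length x. lam ! i * (sort (map abs x)) ! i)"

definition slope_obj :: "real list \<Rightarrow> real list \<Rightarrow> real list \<Rightarrow> real" where
  "slope_obj lam y x = 1/2 * (norm2 (vdiff y x))^2 + sorted_l1 lam x"

definition Prox :: "real list \<Rightarrow> real list \<Rightarrow> real list" where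
  "Prox lam y = (THE x. length x = length y \<and>
      (\<forall>z. length z = length y \<longrightarrow> slope_obj lam y x \<le> slope_obj lam y z))"

end

theory Submission
  imports Defs "HOL-Analysis.L2_Norm" "HOL-Combinatorics.Permutations"
begin

text \<open>The objective F(x) = |y - x|^2/2 + J(x), with J the sorted-l1 norm, is 1-strongly
convex: J is convex because, by the rearrangement inequality, J(x) is the largest value of
\<Sum>i. lam_i |x_(pi i)| over permutations pi. Hence the proximal point x of y exists, is
unique, and satisfies F(x) + |z - x|^2/2 \<le> F(z) for every z. Adding this inequality for
(lam1, y1, x1) at z = x2 to the one for (lam2, y2, x2) at z = x1 bounds |x1 - x2|^2 by
<y1 - y2, x1 - x2> + <lam1 - lam2, s(x2) - s(x1)>, where s(x) is the increasing
rearrangement of the absolute values of x. Sorting absolute values is nonexpansive, so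
Cauchy-Schwarz gives |x1 - x2| \<le> |y1 - y2| + |lam1 - lam2|.\<close>

section \<open>The rearrangement inequality\<close>

lemma sum_list_take_insort_le:
  fixes x :: "'a::linordered_ab_group_add"
  assumes "sorted xs" "1 \<le> k"
  shows "sum_list (take k (insort x xs)) \<le> x + sum_list (take (k - 1) xs)"
  using assms
proof (induction xs arbitrary: k)
  case Nil
  then show ?case by (cases k) auto
next
  case (Cons y xs)
  show ?case
  proof (cases "x \<le> y \<or> k = 1")
    case True
    then show ?thesis using Cons.prems by (cases k) auto
  next
    case False
    then obtain k' where k': "k = Suc (Suc k')"
      using Cons.prems by (cases k; cases "k - 1") auto
    have "sum_list (take (Suc k') (insort x xs)) \<le> x + sum_list (take k' xs)"
      using Cons.IH[of "Suc k'"] Cons.prems by simp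
    then show ?thesis using False k' by (simp add: add.left_commute)
  qed
qed

lemma sum_list_take_sort_le:
  fixes xs :: "'a::linordered_ab_group_add list"
  shows "sum_list (take k (sort xs)) \<le> sum_list (take k xs)"
proof (induction xs arbitrary: k)
  case Nil
  then show ?case by simp
next
  case (Cons x xs)
  show ?case
  proof (cases k)
    case 0
    then show ?thesis by simp
  next
    case (Suc k')
    have "sum_list (take k (insort x (sort xs))) \<le> x + sum_list (take k' (sort xs))"
      using sum_list_take_insort_le[of "sort xs" k x] Suc by simp
    also have "\<dots> \<le> x + sum_list (take k' xs)" using Cons.IH[of k'] by simp
    finally show ?thesis using Suc by simp
  qed
qed

lemma sum_mult_le_last_mult_sum:
  fixes a d :: "nat \<Rightarrow> 'a::linordered_idom"
  assumes "\<And>i j. i \<le> j \<Longrightarrow> j < n \<Longrightarrow> a i \<le> a j"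
    and "\<And>k. k \<le> n \<Longrightarrow> 0 \<le> (\<Sum>i<k. d i)"
  shows "(\<Sum>i<n. a i * d i) \<le> a (n - 1) * (\<Sum>i<n. d i)"
  using assms
proof (induction n)
  case 0
  then show ?case by simp
next
  case (Suc n)
  have "(\<Sum>i<n. a i * d i) \<le> a (n - 1) * (\<Sum>i<n. d i)"
    using Suc.IH Suc.prems by auto
  also have "\<dots> \<le> a n * (\<Sum>i<n. d i)"
    using Suc.prems(1)[of "n - 1" n] Suc.prems(2)[of n] by (simp add: mult_right_mono)
  finally show ?case by (simp add: distrib_left)
qed

lemma rearrangement_le_sort:
  fixes lam b :: "real list"
  assumes "sorted lam" "length lam = n" "length b = n"
  shows "(\<Sum>i<n. lam ! i * b ! i) \<le> (\<Sum>i<n. lam ! i * sort b ! i)"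
proof -
  define d where "d i = b ! i - sort b ! i" for i
  have partial: "(\<Sum>i<k. d i) = sum_list (take k b) - sum_list (take k (sort b))"
    if "k \<le> n" for k
    using that assms by (simp add: d_def sum_subtractf sum_list_sum_nth atLeast0LessThan min_def)
  have "(\<Sum>i<n. lam ! i * d i) \<le> lam ! (n - 1) * (\<Sum>i<n. d i)"
  proof (rule sum_mult_le_last_mult_sum)
    show "lam ! i \<le> lam ! j" if "i \<le> j" "j < n" for i j
      using that assms(1,2) by (simp add: sorted_iff_nth_mono)
    show "0 \<le> (\<Sum>i<k. d i)" if "k \<le> n" for k
      using partial[OF that] sum_list_take_sort_le[of k b] by simp
  qed
  also have "(\<Sum>i<n. d i) = 0"
    using partial[of n] assms by (simp add: sum_mset_sum_list[symmetric])
  finally show ?thesis by (simp add: d_def algebra_simps sum_subtractf)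
qed

section \<open>The sorted-l1 norm\<close>

definition sorted_abs :: "real list \<Rightarrow> real list" where
  "sorted_abs x = sort (map abs x)"

lemma length_sorted_abs [simp]: "length (sorted_abs x) = length x"
  by (simp add: sorted_abs_def)

lemma sorted_sorted_abs: "sorted (sorted_abs x)"
  by (simp add: sorted_abs_def)

lemma sorted_abs_nonneg: "i < length x \<Longrightarrow> 0 \<le> sorted_abs x ! i"
  using nth_mem[of i "sorted_abs x"] by (auto simp: sorted_abs_def)

lemma sorted_l1_conv_sum:
  "length x = p \<Longrightarrow> sorted_l1 lam x = (\<Sum>i<p. lam ! i * sorted_abs x ! i)"
  by (simp add: sorted_l1_def sorted_abs_def)

lemma sorted_l1_nonneg:
  "\<forall>i<length x. 0 \<le> lam ! i \<Longrightarrow> 0 \<le> sorted_l1 lam x"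
  by (auto simp: sorted_l1_conv_sum sorted_abs_nonneg intro!: sum_nonneg)

lemma sorted_abs_permutation:
  obtains \<pi> where "\<pi> permutes {..<length x}"
    "\<And>i. i < length x \<Longrightarrow> sorted_abs x ! i = \<bar>x ! \<pi> i\<bar>"
proof -
  have "mset (sorted_abs x) = mset (map abs x)" by (simp add: sorted_abs_def)
  then obtain \<pi> where \<pi>: "\<pi> permutes {..<length (map abs x)}"
    and perm: "permute_list \<pi> (map abs x) = sorted_abs x"
    using mset_eq_permutation by blast
  have "sorted_abs x ! i = \<bar>x ! \<pi> i\<bar>" if "i < length x" for i
    using that permutes_in_image[OF \<pi>] permute_list_nth[OF \<pi>, of i]
    by (simp add: perm[symmetric])
  with \<pi> show ?thesis using that by simp
qed

lemma sum_mult_abs_permute_le_sorted_abs: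
  assumes "sorted lam" "length lam = p" "length z = p" "\<pi> permutes {..<p}"
  shows "(\<Sum>i<p. lam ! i * \<bar>z ! \<pi> i\<bar>) \<le> (\<Sum>i<p. lam ! i * sorted_abs z ! i)"
proof -
  define b where "b = permute_list \<pi> (map abs z)"
  have b: "b ! i = \<bar>z ! \<pi> i\<bar>" if "i < p" for i
    using that assms permutes_in_image[OF assms(4)] by (simp add: b_def permute_list_nth)
  have "sort b = sorted_abs z" unfolding sorted_abs_def b_def
    by (rule properties_for_sort) (use assms in auto)
  then show ?thesis
    using rearrangement_le_sort[OF assms(1,2), of b] b assms by (simp add: b_def)
qed

definition convex_comb :: "real \<Rightarrow> real list \<Rightarrow> real list \<Rightarrow> real list" where
  "convex_comb t x z = map2 (\<lambda>a b. t * a + (1 - t) * b) x z"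

lemma length_convex_comb [simp]:
  "length (convex_comb t x z) = min (length x) (length z)"
  by (simp add: convex_comb_def)

lemma nth_convex_comb [simp]:
  "i < length x \<Longrightarrow> i < length z \<Longrightarrow> convex_comb t x z ! i = t * x ! i + (1 - t) * z ! i"
  by (simp add: convex_comb_def)

lemma sorted_l1_convex:
  assumes "sorted lam" "length lam = p" "\<forall>i<p. 0 \<le> lam ! i"
    and "length x = p" "length z = p" "0 \<le> t" "t \<le> 1"
  shows "sorted_l1 lam (convex_comb t x z) \<le> t * sorted_l1 lam x + (1 - t) * sorted_l1 lam z"
proof -
  let ?w = "convex_comb t x z"
  have lw: "length ?w = p" using assms by simp
  obtain \<pi> where \<pi>: "\<pi> permutes {..<p}"
    and w: "\<And>i. i < p \<Longrightarrow> sorted_abs ?w ! i = \<bar>?w ! \<pi> i\<bar>"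
    using sorted_abs_permutation[of ?w] lw by metis
  have "sorted_l1 lam ?w = (\<Sum>i<p. lam ! i * \<bar>?w ! \<pi> i\<bar>)"
    using lw w by (simp add: sorted_l1_conv_sum)
  also have "\<dots> \<le> (\<Sum>i<p. t * (lam ! i * \<bar>x ! \<pi> i\<bar>) + (1 - t) * (lam ! i * \<bar>z ! \<pi> i\<bar>))"
  proof (rule sum_mono)
    fix i assume "i \<in> {..<p}"
    then have i: "i < p" and \<pi>i: "\<pi> i < p"
      using permutes_in_image[OF \<pi>] by auto
    have "\<bar>?w ! \<pi> i\<bar> \<le> t * \<bar>x ! \<pi> i\<bar> + (1 - t) * \<bar>z ! \<pi> i\<bar>"
      using \<pi>i assms(4-7) abs_triangle_ineq[of "t * x ! \<pi> i" "(1 - t) * z ! \<pi> i"]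
      by (simp add: abs_mult)
    then show "lam ! i * \<bar>?w ! \<pi> i\<bar>
        \<le> t * (lam ! i * \<bar>x ! \<pi> i\<bar>) + (1 - t) * (lam ! i * \<bar>z ! \<pi> i\<bar>)"
      using assms(3) i mult_left_mono by (fastforce simp: algebra_simps)
  qed
  also have "\<dots> = t * (\<Sum>i<p. lam ! i * \<bar>x ! \<pi> i\<bar>) + (1 - t) * (\<Sum>i<p. lam ! i * \<bar>z ! \<pi> i\<bar>)"
    by (simp add: sum.distrib sum_distrib_left)
  also have "\<dots> \<le> t * sorted_l1 lam x + (1 - t) * sorted_l1 lam z"
    using sum_mult_abs_permute_le_sorted_abs[OF assms(1,2) _ \<pi>] assms
    by (simp add: sorted_l1_conv_sum add_mono mult_left_mono)
  finally show ?thesis .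
qed

lemma sum_sq_sorted_abs:
  "length x = p \<Longrightarrow> (\<Sum>i<p. (sorted_abs x ! i)^2) = (\<Sum>i<p. (x ! i)^2)"
proof -
  assume "length x = p"
  then have "(\<Sum>i<p. (sorted_abs x ! i)^2) = sum_list (map (\<lambda>v. v^2) (sorted_abs x))
      \<and> (\<Sum>i<p. (x ! i)^2) = sum_list (map (\<lambda>v. v^2) (map abs x))"
    by (simp add: sum_list_sum_nth atLeast0LessThan)
  moreover have "mset (map (\<lambda>v. v^2) (sorted_abs x)) = mset (map (\<lambda>v. v^2) (map abs x))"
    by (simp add: sorted_abs_def multiset.map_comp comp_def)
  ultimately show ?thesis by (metis sum_mset_sum_list)
qed

lemma sum_sq_diff_sorted_abs_le:
  assumes "length x = p" "length z = p"
  shows "(\<Sum>i<p. (sorted_abs x ! i - sorted_abs z ! i)^2) \<le> (\<Sum>i<p. (x ! i - z ! i)^2)"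
proof -
  obtain \<pi> where \<pi>: "\<pi> permutes {..<p}"
    and x: "\<And>i. i < p \<Longrightarrow> sorted_abs x ! i = \<bar>x ! \<pi> i\<bar>"
    using sorted_abs_permutation[of x] assms(1) by metis
  have "(\<Sum>i<p. x ! i * z ! i) \<le> (\<Sum>i<p. \<bar>x ! i\<bar> * \<bar>z ! i\<bar>)"
    by (rule sum_mono) (simp add: abs_mult[symmetric])
  also have "\<dots> = (\<Sum>i<p. \<bar>x ! \<pi> i\<bar> * \<bar>z ! \<pi> i\<bar>)"
    using sum.permute[OF \<pi>, of "\<lambda>i. \<bar>x ! i\<bar> * \<bar>z ! i\<bar>"] by simp
  also have "\<dots> = (\<Sum>i<p. sorted_abs x ! i * \<bar>z ! \<pi> i\<bar>)" using x by simp
  also have "\<dots> \<le> (\<Sum>i<p. sorted_abs x ! i * sorted_abs z ! i)"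
    using sum_mult_abs_permute_le_sorted_abs[OF sorted_sorted_abs _ assms(2) \<pi>] assms by simp
  finally have "(\<Sum>i<p. x ! i * z ! i) \<le> (\<Sum>i<p. sorted_abs x ! i * sorted_abs z ! i)" .
  moreover have "(\<Sum>i<p. (a ! i - b ! i)^2)
      = (\<Sum>i<p. (a ! i)^2) + (\<Sum>i<p. (b ! i)^2) - 2 * (\<Sum>i<p. a ! i * b ! i)" for a b :: "real list"
    by (simp add: power2_diff sum.distrib sum_subtractf sum_distrib_left mult.assoc)
  ultimately show ?thesis
    using sum_sq_sorted_abs[OF assms(1)] sum_sq_sorted_abs[OF assms(2)] by simp
qed

section \<open>The proximal objective\<close>

definition sq_dist :: "nat \<Rightarrow> real list \<Rightarrow> real list \<Rightarrow> real" where
  "sq_dist p a b = (\<Sum>i<p. (a ! i - b ! i)^2)"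

lemma sq_dist_nonneg: "0 \<le> sq_dist p a b"
  by (simp add: sq_dist_def sum_nonneg)

lemma sq_dist_commute: "sq_dist p a b = sq_dist p b a"
  by (simp add: sq_dist_def power2_commute)

lemma sqrt_sq_dist_conv_L2_set: "sqrt (sq_dist p a b) = L2_set (\<lambda>i. a ! i - b ! i) {..<p}"
  by (simp add: sq_dist_def L2_set_def)

lemma norm2_vdiff_conv_sq_dist:
  "length a = p \<Longrightarrow> length b = p \<Longrightarrow> norm2 (vdiff a b) = sqrt (sq_dist p a b)"
  by (simp add: norm2_def vdiff_def sq_dist_def)

lemma slope_obj_conv_sq_dist:
  "length y = p \<Longrightarrow> length x = p \<Longrightarrow> slope_obj lam y x = sq_dist p y x / 2 + sorted_l1 lam x"
  by (simp add: slope_obj_def norm2_vdiff_conv_sq_dist sq_dist_nonneg)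

lemma sq_dist_convex_comb:
  assumes "length x = p" "length z = p"
  shows "sq_dist p y (convex_comb t x z)
    = t * sq_dist p y x + (1 - t) * sq_dist p y z - t * (1 - t) * sq_dist p x z"
  unfolding sq_dist_def sum_distrib_left sum_subtractf[symmetric] sum.distrib[symmetric]
  using assms by (intro sum.cong) (simp_all add: power2_eq_square algebra_simps)

lemma slope_obj_strongly_convex:
  assumes "sorted lam" "length lam = p" "\<forall>i<p. 0 \<le> lam ! i"
    and "length y = p" "length x = p" "length z = p" "0 \<le> t" "t \<le> 1"
  shows "slope_obj lam y (convex_comb t x z)
    \<le> t * slope_obj lam y x + (1 - t) * slope_obj lam y z - t * (1 - t) * sq_dist p x z / 2"
  using sorted_l1_convex[OF assms(1-3,5-8)] sq_dist_convex_comb[OF assms(5,6), of y t] assms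
  by (simp add: slope_obj_conv_sq_dist algebra_simps add_divide_distrib diff_divide_distrib)

text \<open>Letting the step t towards z shrink to 0 in strong convexity.\<close>

lemma slope_obj_minimizer_quadratic_growth:
  assumes "sorted lam" "length lam = p" "\<forall>i<p. 0 \<le> lam ! i"
    and "length y = p" "length x = p" "length z = p"
    and min: "\<And>w. length w = p \<Longrightarrow> slope_obj lam y x \<le> slope_obj lam y w"
  shows "slope_obj lam y x + sq_dist p z x / 2 \<le> slope_obj lam y z"
proof (rule field_le_epsilon)
  fix e :: real assume "0 < e"
  define c where "c = sq_dist p z x / 2"
  define t where "t = min 1 (e / (c + 1))"
  have c: "0 \<le> c" by (simp add: c_def sq_dist_nonneg)
  have t: "0 < t" "t \<le> 1" using \<open>0 < e\<close> c by (auto simp: t_def)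
  have "t * c \<le> e / (c + 1) * c" using c by (intro mult_right_mono) (simp_all add: t_def)
  also have "\<dots> \<le> e" using \<open>0 < e\<close> c by (simp add: field_simps)
  finally have tc: "t * c \<le> e" .
  have "slope_obj lam y x \<le> slope_obj lam y (convex_comb t z x)"
    using min assms by simp
  also have "\<dots> \<le> t * slope_obj lam y z + (1 - t) * slope_obj lam y x - t * (1 - t) * (2 * c) / 2"
    using slope_obj_strongly_convex[OF assms(1-4,6,5)] t by (simp add: c_def)
  finally have "t * (slope_obj lam y x + c) \<le> t * (slope_obj lam y z + t * c)"
    by (simp add: field_simps)
  then have "slope_obj lam y x + c \<le> slope_obj lam y z + t * c" using t by simp
  then show "slope_obj lam y x + sq_dist p z x / 2 \<le> slope_obj lam y z + e"
    using tc by (simp add: c_def)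
qed

section \<open>Existence and uniqueness of the proximal point\<close>

lemma sq_dist_le_of_near_minimal:
  assumes "sorted lam" "length lam = p" "\<forall>i<p. 0 \<le> lam ! i"
    and "length y = p" "length a = p" "length b = p"
    and "\<And>z. length z = p \<Longrightarrow> m \<le> slope_obj lam y z"
  shows "sq_dist p a b \<le> 4 * (slope_obj lam y a - m) + 4 * (slope_obj lam y b - m)"
proof -
  have "m \<le> slope_obj lam y (convex_comb (1/2) a b)" using assms by simp
  also have "\<dots> \<le> 1/2 * slope_obj lam y a + (1 - 1/2) * slope_obj lam y b
      - 1/2 * (1 - 1/2) * sq_dist p a b / 2"
    by (rule slope_obj_strongly_convex[OF assms(1-6)]) auto
  finally show ?thesis by simp
qed

lemma Cauchy_of_sq_diff_bound:
  fixes f g :: "nat \<Rightarrow> real"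
  assumes "g \<longlonglongrightarrow> 0" "\<And>a b. (f a - f b)^2 \<le> g a + g b"
  shows "Cauchy f"
proof (rule CauchyI)
  fix e :: real assume "0 < e"
  then have "eventually (\<lambda>n. g n < e^2 / 2) sequentially"
    using order_tendstoD(2)[OF assms(1), of "e^2 / 2"] by simp
  then obtain M where M: "\<And>n. M \<le> n \<Longrightarrow> g n < e^2 / 2"
    by (auto simp: eventually_sequentially)
  have "\<bar>f a - f b\<bar> < e" if "M \<le> a" "M \<le> b" for a b
  proof -
    have "\<bar>f a - f b\<bar>^2 < e^2" using assms(2)[of a b] M[OF that(1)] M[OF that(2)] by simp
    then show ?thesis using \<open>0 < e\<close> power2_less_imp_less[of "\<bar>f a - f b\<bar>" e] by simp
  qed
  then show "\<exists>M. \<forall>a\<ge>M. \<forall>b\<ge>M. norm (f a - f b) < e" by auto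
qed

text \<open>Cauchy-Schwarz, combined with the nonexpansiveness of sorting absolute values.\<close>

lemma sorted_l1_lipschitz:
  assumes "length a = p" "length b = p"
  shows "\<bar>sorted_l1 lam a - sorted_l1 lam b\<bar>
    \<le> L2_set (\<lambda>i. lam ! i) {..<p} * sqrt (sq_dist p a b)"
proof -
  have "\<bar>sorted_l1 lam a - sorted_l1 lam b\<bar> = \<bar>\<Sum>i<p. lam ! i * (sorted_abs a ! i - sorted_abs b ! i)\<bar>"
    using assms by (simp add: sorted_l1_conv_sum sum_subtractf algebra_simps)
  also have "\<dots> \<le> (\<Sum>i<p. \<bar>lam ! i\<bar> * \<bar>sorted_abs a ! i - sorted_abs b ! i\<bar>)"
    by (rule order_trans[OF sum_abs]) (simp add: abs_mult)
  also have "\<dots> \<le> L2_set (\<lambda>i. lam ! i) {..<p} * L2_set (\<lambda>i. sorted_abs a ! i - sorted_abs b ! i) {..<p}"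
    by (rule L2_set_mult_ineq)
  also have "L2_set (\<lambda>i. sorted_abs a ! i - sorted_abs b ! i) {..<p} \<le> sqrt (sq_dist p a b)"
    using sum_sq_diff_sorted_abs_le[OF assms] by (simp add: L2_set_def sq_dist_def)
  finally show ?thesis by (simp add: mult_left_mono L2_set_nonneg)
qed

lemma slope_obj_tendsto:
  assumes "length y = p" "length x = p" "\<And>n. length (X n) = p"
    and "\<And>i. i < p \<Longrightarrow> (\<lambda>n. X n ! i) \<longlonglongrightarrow> x ! i"
  shows "(\<lambda>n. slope_obj lam y (X n)) \<longlonglongrightarrow> slope_obj lam y x"
proof -
  have "(\<lambda>n. sq_dist p y (X n)) \<longlonglongrightarrow> sq_dist p y x"
    unfolding sq_dist_def using assms(4) by (intro tendsto_intros) auto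
  moreover have "(\<lambda>n. sorted_l1 lam (X n)) \<longlonglongrightarrow> sorted_l1 lam x"
  proof (rule LIM_zero_cancel, rule tendsto_0_le)
    have "(\<lambda>n. sq_dist p (X n) x) \<longlonglongrightarrow> (\<Sum>i<p. (x ! i - x ! i)^2)"
      unfolding sq_dist_def using assms(4) by (intro tendsto_intros) auto
    then show "(\<lambda>n. sqrt (sq_dist p (X n) x)) \<longlonglongrightarrow> 0"
      using tendsto_real_sqrt by fastforce
    show "\<forall>\<^sub>F n in sequentially. norm (sorted_l1 lam (X n) - sorted_l1 lam x)
        \<le> norm (sqrt (sq_dist p (X n) x)) * L2_set (\<lambda>i. lam ! i) {..<p}"
      using sorted_l1_lipschitz[OF assms(3) assms(2)] by (simp add: mult.commute sq_dist_nonneg)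
  qed
  ultimately show ?thesis
    using assms by (simp add: slope_obj_conv_sq_dist tendsto_intros)
qed

text \<open>Near-minimizing sequences are Cauchy by strong convexity; their limit is a minimizer.\<close>

lemma slope_obj_has_minimizer:
  assumes lam: "sorted lam" "length lam = p" "\<forall>i<p. 0 \<le> lam ! i" and "length y = p"
  obtains x where "length x = p" "\<And>z. length z = p \<Longrightarrow> slope_obj lam y x \<le> slope_obj lam y z"
proof -
  let ?F = "slope_obj lam y"
  define m where "m = Inf (?F ` {z. length z = p})"
  have nonempty: "?F ` {z. length z = p} \<noteq> {}" by (auto intro: exI[of _ "replicate p 0"])
  have F_nonneg: "0 \<le> ?F z" if "length z = p" for z
    using that assms sorted_l1_nonneg[of z lam] sq_dist_nonneg[of p y z]
    by (simp add: slope_obj_conv_sq_dist)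
  have m_le: "m \<le> ?F z" if "length z = p" for z
    unfolding m_def using that F_nonneg by (intro cInf_lower) (auto simp: bdd_below_def)
  have "\<exists>z. length z = p \<and> ?F z < m + 1 / real (Suc n)" for n
    using cInf_lessD[OF nonempty, of "m + 1 / real (Suc n)"] by (auto simp: m_def)
  then obtain X where X: "\<And>n. length (X n) = p" "\<And>n. ?F (X n) < m + 1 / real (Suc n)"
    by metis
  have "(\<lambda>n. ?F (X n)) \<longlonglongrightarrow> m"
  proof (rule tendsto_sandwich[of "\<lambda>n. m" _ _ "\<lambda>n. m + 1 / real (Suc n)"])
    show "(\<lambda>n. m + 1 / real (Suc n)) \<longlonglongrightarrow> m"
      using tendsto_add[OF tendsto_const LIMSEQ_Suc[OF lim_1_over_n], of m] by simp
    show "\<forall>\<^sub>F n in sequentially. m \<le> ?F (X n)" using m_le X(1) by simp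
    show "\<forall>\<^sub>F n in sequentially. ?F (X n) \<le> m + 1 / real (Suc n)"
      by (intro always_eventually allI less_imp_le X(2))
  qed simp
  then have gap: "(\<lambda>n. 4 * (?F (X n) - m)) \<longlonglongrightarrow> 0"
    using tendsto_mult[OF tendsto_const[of 4] LIM_zero] by fastforce
  have "Cauchy (\<lambda>n. X n ! i)" if "i < p" for i
  proof (rule Cauchy_of_sq_diff_bound[OF gap])
    fix a b
    have "(X a ! i - X b ! i)^2 \<le> sq_dist p (X a) (X b)"
      unfolding sq_dist_def using that by (intro member_le_sum) auto
    also have "\<dots> \<le> 4 * (?F (X a) - m) + 4 * (?F (X b) - m)"
      using sq_dist_le_of_near_minimal[OF assms X(1) X(1) m_le] .
    finally show "(X a ! i - X b ! i)^2 \<le> 4 * (?F (X a) - m) + 4 * (?F (X b) - m)" .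
  qed
  then have conv: "(\<lambda>n. X n ! i) \<longlonglongrightarrow> lim (\<lambda>n. X n ! i)" if "i < p" for i
    using that by (simp add: Cauchy_convergent_iff convergent_LIMSEQ_iff)
  define x where "x = map (\<lambda>i. lim (\<lambda>n. X n ! i)) [0..<p]"
  have "length x = p" by (simp add: x_def)
  have "(\<lambda>n. ?F (X n)) \<longlonglongrightarrow> ?F x"
    using conv by (intro slope_obj_tendsto[OF assms(4) \<open>length x = p\<close> X(1)]) (simp add: x_def)
  with \<open>(\<lambda>n. ?F (X n)) \<longlonglongrightarrow> m\<close> have "m = ?F x" by (rule LIMSEQ_unique)
  then show ?thesis using that \<open>length x = p\<close> m_le by simp
qed

lemma sq_dist_eq_0_imp_eq:
  "length a = p \<Longrightarrow> length b = p \<Longrightarrow> sq_dist p a b = 0 \<Longrightarrow> a = b"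
  unfolding sq_dist_def by (subst (asm) sum_nonneg_eq_0_iff) (auto intro: nth_equalityI)

lemma Prox_minimizes:
  assumes "sorted lam" "length lam = p" "\<forall>i<p. 0 \<le> lam ! i" "length y = p"
  shows "length (Prox lam y) = p"
    and "\<And>z. length z = p \<Longrightarrow> slope_obj lam y (Prox lam y) \<le> slope_obj lam y z"
proof -
  let ?P = "\<lambda>x. length x = length y
    \<and> (\<forall>z. length z = length y \<longrightarrow> slope_obj lam y x \<le> slope_obj lam y z)"
  obtain x where x: "length x = p" "\<And>z. length z = p \<Longrightarrow> slope_obj lam y x \<le> slope_obj lam y z"
    using slope_obj_has_minimizer[OF assms] by blast
  have "x' = x" if "?P x'" for x'
  proof -
    have "slope_obj lam y x + sq_dist p x' x / 2 \<le> slope_obj lam y x'"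
      using slope_obj_minimizer_quadratic_growth[OF assms x(1) _ x(2), of x'] that assms(4) by simp
    moreover have "slope_obj lam y x' \<le> slope_obj lam y x" using that x(1) assms(4) by simp
    ultimately have "sq_dist p x' x = 0" using sq_dist_nonneg[of p x' x] by linarith
    then show "x' = x" using sq_dist_eq_0_imp_eq[of x' p x] that x(1) assms(4) by simp
  qed
  then have "?P (Prox lam y)"
    unfolding Prox_def using x assms(4) by (intro theI[of ?P x]) simp_all
  then show "length (Prox lam y) = p"
    and "\<And>z. length z = p \<Longrightarrow> slope_obj lam y (Prox lam y) \<le> slope_obj lam y z"
    using assms(4) by simp_all
qed

section \<open>Stability of the proximal point\<close>

lemma slope_obj_cross_difference_le:
  assumes "length y1 = p" "length y2 = p" "length x1 = p" "length x2 = p"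
  shows "slope_obj lam1 y1 x2 - slope_obj lam2 y2 x2 + (slope_obj lam2 y2 x1 - slope_obj lam1 y1 x1)
    \<le> (sqrt (sq_dist p y1 y2) + sqrt (sq_dist p lam1 lam2)) * sqrt (sq_dist p x1 x2)"
proof -
  let ?inner = "\<lambda>f g. \<Sum>i<p. f i * g i"
  have "slope_obj lam1 y1 x2 - slope_obj lam2 y2 x2 + (slope_obj lam2 y2 x1 - slope_obj lam1 y1 x1)
    = ?inner (\<lambda>i. y1 ! i - y2 ! i) (\<lambda>i. x1 ! i - x2 ! i)
      + ?inner (\<lambda>i. lam1 ! i - lam2 ! i) (\<lambda>i. sorted_abs x2 ! i - sorted_abs x1 ! i)"
    using assms unfolding slope_obj_conv_sq_dist[OF assms(1,3)] slope_obj_conv_sq_dist[OF assms(1,4)]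
      slope_obj_conv_sq_dist[OF assms(2,3)] slope_obj_conv_sq_dist[OF assms(2,4)]
    by (simp add: sq_dist_def sorted_l1_conv_sum sum_subtractf[symmetric] sum.distrib[symmetric]
        sum_divide_distrib power2_eq_square algebra_simps)
       (rule sum.cong, simp_all add: field_simps)
  also have "\<dots> \<le> L2_set (\<lambda>i. y1 ! i - y2 ! i) {..<p} * L2_set (\<lambda>i. x1 ! i - x2 ! i) {..<p}
      + L2_set (\<lambda>i. lam1 ! i - lam2 ! i) {..<p}
        * L2_set (\<lambda>i. sorted_abs x2 ! i - sorted_abs x1 ! i) {..<p}"
    by (intro add_mono order_trans[OF sum_mono L2_set_mult_ineq]) (simp_all add: abs_mult[symmetric])
  also have "L2_set (\<lambda>i. sorted_abs x2 ! i - sorted_abs x1 ! i) {..<p} \<le> sqrt (sq_dist p x1 x2)"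
    using sum_sq_diff_sorted_abs_le[OF assms(4,3)]
    by (simp add: L2_set_def sq_dist_def power2_commute)
  finally show ?thesis
    by (simp add: sqrt_sq_dist_conv_L2_set distrib_right mult_left_mono L2_set_nonneg)
qed

lemma sqrt_le_of_le_mult_sqrt:
  fixes D c :: real
  assumes "0 \<le> c" "D \<le> c * sqrt D"
  shows "sqrt D \<le> c"
proof (cases "D \<le> 0")
  case False
  then have "sqrt D * sqrt D \<le> c * sqrt D" using assms(2) by simp
  with False show ?thesis using mult_right_le_imp_le[of "sqrt D" "sqrt D" c] by simp
qed (use assms(1) in \<open>simp add: order_trans[OF _ assms(1)]\<close>)

theorem lemma19:
  fixes p :: nat and y1 y2 lam1 lam2 :: "real list"
  assumes "length y1 = p" and "length y2 = p"
    and "length lam1 = p" and "length lam2 = p"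
    and "\<forall>i<p. 0 \<le> lam1 ! i" and "sorted lam1"
    and "\<forall>i<p. 0 \<le> lam2 ! i" and "sorted lam2"
  shows "norm2 (vdiff (Prox lam1 y1) (Prox lam2 y2))
           \<le> 2 * (norm2 (vdiff lam1 lam2) + norm2 (vdiff y1 y2))"
proof -
  define x1 where "x1 = Prox lam1 y1"
  define x2 where "x2 = Prox lam2 y2"
  note P1 = Prox_minimizes[OF assms(6,3,5,1), folded x1_def]
  note P2 = Prox_minimizes[OF assms(8,4,7,2), folded x2_def]
  have "slope_obj lam1 y1 x1 + sq_dist p x2 x1 / 2 \<le> slope_obj lam1 y1 x2"
    using slope_obj_minimizer_quadratic_growth[OF assms(6,3,5,1) P1(1) P2(1) P1(2)] .
  moreover have "slope_obj lam2 y2 x2 + sq_dist p x1 x2 / 2 \<le> slope_obj lam2 y2 x1"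
    using slope_obj_minimizer_quadratic_growth[OF assms(8,4,7,2) P2(1) P1(1) P2(2)] .
  ultimately have "sq_dist p x1 x2
      \<le> (sqrt (sq_dist p y1 y2) + sqrt (sq_dist p lam1 lam2)) * sqrt (sq_dist p x1 x2)"
    using slope_obj_cross_difference_le[OF assms(1,2) P1(1) P2(1), of lam1 lam2]
    by (simp add: sq_dist_commute[of p x2 x1])
  then have "sqrt (sq_dist p x1 x2) \<le> sqrt (sq_dist p y1 y2) + sqrt (sq_dist p lam1 lam2)"
    by (rule sqrt_le_of_le_mult_sqrt[rotated]) (simp add: sq_dist_nonneg)
  then have "sqrt (sq_dist p x1 x2)
      \<le> 2 * (sqrt (sq_dist p lam1 lam2) + sqrt (sq_dist p y1 y2))"
    by (smt (verit) real_sqrt_ge_zero sq_dist_nonneg)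
  then show ?thesis
    using assms(1-4) P1(1) P2(1)
    by (simp add: x1_def[symmetric] x2_def[symmetric] norm2_vdiff_conv_sq_dist)
qed

end
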